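(* Let $p$ be a prime, let $j\not\equiv 0,1 \pmod p$, and let $m\geq 2$ be an integer dividing $p-1$. Suppose $a,b,c\in\mathrm{GF}(p)$ satisfy \[ (1-j)a^m+jb^m\equiv c^m \pmod p, \] where $a^m,b^m,c^m$ are non-zero and pairwise distinct modulo $p$. Let $\alpha\not\equiv 0$ and $\gamma$ be constants modulo $p$. Form a new first row from the first row of $B_{p,j}$ (whose entry in column $i$ is $ij \bmod p$) as follows: every symbol of the form $\alpha\beta^m+\gamma$ with $\beta\not\equiv 0$ (i.e. every symbol $s$ such that $(s-\gamma)/\alpha$ is a non-zero $m$th power mod $p$) is replaced by the symbol $\alpha(b/c)^m\beta^m+\gamma$; all other symbols are left unchanged. Then this new first row generates a diagonally cyclic latin square of order $p$.
   Context: Rows, columns and symbols of squares of order $n$ are indexed by $\{0,1,\dots,n-1\}$ and computed modulo $n$. A latin square with operation $\circ$ (symbol $i\circ j$ in cell $(i,j)$) of odd order $n$ is diagonally cyclic if $i\circ j=k$ implies $(i+1)\circ(j+1)=k+1$ for all cells. A first row $(r_0,\dots,r_{n-1})$ "generates" the $n\times n$ array whose cell $(i,k)$ contains $r_{k-i}+i \pmod n$; it generates a diagonally cyclic latin square precisely when this array is a latin square. For $j$ coprime to odd $n$ with $j\neq 1$, $B_{n,j}$ is the diagonally cyclic latin square generated by the first row with $0\circ i = ij \pmod n$. *)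

theory Defs
  imports "HOL-Number_Theory.Number_Theory"
begin

definition generated_array :: "nat \<Rightarrow> (nat \<Rightarrow> int) \<Rightarrow> nat \<Rightarrow> nat \<Rightarrow> int" where
  "generated_array n r i k = (r ((k + n - i) mod n) + int i) mod int n"

definition latin_square :: "nat \<Rightarrow> (nat \<Rightarrow> nat \<Rightarrow> int) \<Rightarrow> bool" where
  "latin_square n L \<longleftrightarrow>
     (\<forall>i<n. bij_betw (\<lambda>k. L i k) {..<n} {0..<int n}) \<and>
     (\<forall>k<n. bij_betw (\<lambda>i. L i k) {..<n} {0..<int n})"

definition generates_dcls :: "nat \<Rightarrow> (nat \<Rightarrow> int) \<Rightarrow> bool" where
  "generates_dcls n r \<longleftrightarrow> latin_square n (generated_array n r)"

definition B_first_row :: "nat \<Rightarrow> int \<Rightarrow> nat \<Rightarrow> int" where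
  "B_first_row n j i = (int i * j) mod int n"

end

theory Submission
  imports Defs
begin

(* Write s i = i*j for the first row of B_{p,j} and Q for the set of symbols of the form
   alpha*beta^m + gamma with beta a unit mod p.  The new row r' is obtained from s by the
   affine map x |-> gamma + (b/c)^m (x - gamma) on the symbols in Q, and is s elsewhere.

   (1) A first row r generates a diagonally cyclic latin square as soon as both r and
       t |-> r t - t are injective mod n (an orthomorphism); this is a statement about the
       generated array alone.
   (2) Recolouring lemma: if g agrees (up to a unit factor e) with an injective f outside Q
       and is an affine rescaling of f by a nonzero m-th power (d/c)^m on Q, then g is
       injective.  The key point is that such a rescaling maps Q into Q.
   (3) r' is such a recolouring of s (with e = 1, d = b), and, using the relation
       (1-j)a^m + j b^m = c^m, so is j*(r' t - t) (with e = j - 1, d = a).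
   Only the facts that j, j - 1, a, b, c are units mod p enter; the theorem follows. *)

definition injective_mod :: "nat \<Rightarrow> int \<Rightarrow> (nat \<Rightarrow> int) \<Rightarrow> bool" where
  "injective_mod n P f \<longleftrightarrow> (\<forall>t1<n. \<forall>t2<n. [f t1 = f t2] (mod P) \<longrightarrow> t1 = t2)"

lemma cong_int_less_eq:
  assumes "[int i = int k] (mod int n)" "i < n" "k < n"
  shows "i = k"
  using assms cong_less_modulus_unique_nat by (simp add: cong_int_iff)

lemma bij_betw_of_inj_on_card:
  fixes f :: "nat \<Rightarrow> int"
  assumes "inj_on f {..<n}" "\<forall>k<n. f k \<in> {0..<int n}"
  shows "bij_betw f {..<n} {0..<int n}"
proof -
  have "f ` {..<n} \<subseteq> {0..<int n}" using assms(2) by auto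
  moreover have "card (f ` {..<n}) = card {0..<int n}" using card_image[OF assms(1)] by simp
  ultimately have "f ` {..<n} = {0..<int n}" by (simp add: card_subset_eq)
  thus ?thesis using assms(1) by (simp add: bij_betw_def)
qed

lemma generated_array_cong:
  assumes "i < n" "k < n"
  defines "t \<equiv> (k + n - i) mod n"
  shows "t < n" and "[int t = int k - int i] (mod int n)"
    and "[generated_array n r i k = r t + int i] (mod int n)"
proof -
  show "t < n" using assms(1) by (simp add: t_def)
  have "int t = int (k + n - i) mod int n" by (simp add: t_def zmod_int)
  also have "int (k + n - i) = (int k - int i) + int n" using assms by simp
  finally show "[int t = int k - int i] (mod int n)" by (simp add: cong_def)
  show "[generated_array n r i k = r t + int i] (mod int n)"
    by (simp add: generated_array_def t_def cong_def)
qed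

(* Step (1): rows are latin because r is injective (k determines t = k - i), columns are
   latin because cell (i,k) is also r t - t + k, and t |-> r t - t is injective. *)
lemma generates_dcls_of_orthomorphism:
  fixes r :: "nat \<Rightarrow> int"
  assumes inj_r: "injective_mod n (int n) r"
    and inj_diff: "injective_mod n (int n) (\<lambda>t. r t - int t)"
  shows "generates_dcls n r"
  unfolding generates_dcls_def latin_square_def
proof (intro conjI allI impI)
  fix i assume i: "i < n"
  show "bij_betw (generated_array n r i) {..<n} {0..<int n}"
  proof (rule bij_betw_of_inj_on_card)
    show "inj_on (generated_array n r i) {..<n}"
    proof (rule inj_onI)
      fix k1 k2 assume k: "k1 \<in> {..<n}" "k2 \<in> {..<n}"
        and eq: "generated_array n r i k1 = generated_array n r i k2"
      define t1 where "t1 = (k1 + n - i) mod n"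
      define t2 where "t2 = (k2 + n - i) mod n"
      note c1 = generated_array_cong[of i n k1, folded t1_def]
       and c2 = generated_array_cong[of i n k2, folded t2_def]
      have "[r t1 + int i = r t2 + int i] (mod int n)"
        using c1(3)[OF i] c2(3)[OF i] k eq by (metis cong_sym cong_trans lessThan_iff)
      hence "t1 = t2"
        using inj_r c1(1)[OF i] c2(1)[OF i] k by (simp add: injective_mod_def cong_add_rcancel)
      hence "[int k1 - int i = int k2 - int i] (mod int n)"
        using c1(2)[OF i] c2(2)[OF i] k by (metis cong_sym cong_trans lessThan_iff)
      hence "[int k1 = int k2] (mod int n)" by (simp add: cong_iff_dvd_diff)
      thus "k1 = k2" using k cong_int_less_eq by simp
    qed
  qed (simp add: generated_array_def)
next
  fix k assume k: "k < n"
  show "bij_betw (\<lambda>i. generated_array n r i k) {..<n} {0..<int n}"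
  proof (rule bij_betw_of_inj_on_card)
    show "inj_on (\<lambda>i. generated_array n r i k) {..<n}"
    proof (rule inj_onI)
      fix i1 i2 assume i: "i1 \<in> {..<n}" "i2 \<in> {..<n}"
        and eq: "generated_array n r i1 k = generated_array n r i2 k"
      define t1 where "t1 = (k + n - i1) mod n"
      define t2 where "t2 = (k + n - i2) mod n"
      note c1 = generated_array_cong[of i1 n k, folded t1_def]
       and c2 = generated_array_cong[of i2 n k, folded t2_def]
      have "int n dvd (r t1 + int i1) - (r t2 + int i2)"
        using c1(3) c2(3) i k eq by (metis cong_iff_dvd_diff cong_sym cong_trans lessThan_iff)
      moreover have d1: "int n dvd int t1 - (int k - int i1)"
        and d2: "int n dvd int t2 - (int k - int i2)"
        using c1(2) c2(2) i k by (simp_all add: cong_iff_dvd_diff)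
      moreover have "(r t1 - int t1) - (r t2 - int t2) =
          ((r t1 + int i1) - (r t2 + int i2)) - (int t1 - (int k - int i1)) + (int t2 - (int k - int i2))"
        by simp
      ultimately have "[r t1 - int t1 = r t2 - int t2] (mod int n)"
        by (metis cong_iff_dvd_diff dvd_add dvd_diff)
      hence "t1 = t2" using inj_diff c1(1) c2(1) i k by (simp add: injective_mod_def)
      hence "int i1 - int i2 = (int t1 - (int k - int i1)) - (int t2 - (int k - int i2))" by simp
      hence "[int i1 = int i2] (mod int n)"
        unfolding cong_iff_dvd_diff using dvd_diff[OF d1 d2] by simp
      thus "i1 = i2" using i cong_int_less_eq by simp
    qed
  qed (use k in \<open>simp add: generated_array_def\<close>)
qed

definition shifted_power :: "int \<Rightarrow> nat \<Rightarrow> int \<Rightarrow> int \<Rightarrow> int \<Rightarrow> bool" where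
  "shifted_power P m \<alpha> \<gamma> x \<longleftrightarrow> (\<exists>\<beta>. \<not> [\<beta> = 0] (mod P) \<and> [x = \<alpha> * \<beta> ^ m + \<gamma>] (mod P))"

lemma cong_cancel_prime:
  fixes P k x y :: int
  assumes "prime P" "\<not> P dvd k"
  shows "[k * x = k * y] (mod P) \<longleftrightarrow> [x = y] (mod P)"
proof -
  have "coprime k P" using prime_imp_coprime[OF assms] by (simp add: ac_simps)
  thus ?thesis by (rule cong_mult_lcancel)
qed

(* Rescaling x - gamma by the nonzero m-th power (d/c)^m preserves membership in the
   shifted set: if y - gamma = alpha beta^m then x - gamma = alpha (d beta / c)^m. *)
lemma shifted_power_transfer:
  fixes P c d x y \<alpha> \<gamma> :: int
  assumes P: "prime P" and c: "\<not> P dvd c" and d: "\<not> P dvd d"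
    and xy: "[c ^ m * (x - \<gamma>) = d ^ m * (y - \<gamma>)] (mod P)"
    and y: "shifted_power P m \<alpha> \<gamma> y"
  shows "shifted_power P m \<alpha> \<gamma> x"
proof -
  obtain \<beta> where \<beta>: "\<not> P dvd \<beta>" "[y - \<gamma> = \<alpha> * \<beta> ^ m] (mod P)"
    using y by (auto simp: shifted_power_def cong_0_iff cong_iff_dvd_diff algebra_simps)
  have "coprime c P" using prime_imp_coprime[OF P c] by (simp add: ac_simps)
  then obtain c' where c': "[c * c' = 1] (mod P)" using cong_solve_coprime_int by blast
  have "\<not> P dvd c'"
  proof
    assume "P dvd c'"
    hence "P dvd 1" using c' by (metis cong_dvd_iff dvd_mult)
    thus False using P not_prime_unit by blast
  qed
  define \<delta> where "\<delta> = c' * d * \<beta>"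
  have \<delta>: "\<not> P dvd \<delta>"
    unfolding \<delta>_def using P \<open>\<not> P dvd c'\<close> d \<beta>(1) by (simp add: prime_dvd_mult_iff)
  have "[x - \<gamma> = (c * c') ^ m * (x - \<gamma>)] (mod P)"
    using cong_scalar_right[OF cong_pow[OF c'], of m "x - \<gamma>"] by (simp add: cong_sym)
  also have "(c * c') ^ m * (x - \<gamma>) = c' ^ m * (c ^ m * (x - \<gamma>))"
    by (simp add: power_mult_distrib ac_simps)
  also have "[c' ^ m * (c ^ m * (x - \<gamma>)) = c' ^ m * (d ^ m * (y - \<gamma>))] (mod P)"
    using xy by (rule cong_scalar_left)
  also have "[c' ^ m * (d ^ m * (y - \<gamma>)) = c' ^ m * (d ^ m * (\<alpha> * \<beta> ^ m))] (mod P)"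
    using \<beta>(2) by (intro cong_scalar_left)
  also have "c' ^ m * (d ^ m * (\<alpha> * \<beta> ^ m)) = \<alpha> * \<delta> ^ m"
    by (simp add: \<delta>_def power_mult_distrib ac_simps)
  finally have "[x = \<alpha> * \<delta> ^ m + \<gamma>] (mod P)"
    by (simp add: cong_iff_dvd_diff algebra_simps)
  thus ?thesis using \<delta> by (auto simp: shifted_power_def cong_0_iff)
qed

(* Mixed pairs cannot collide: a collision would put
   f k into the shifted set by the transfer lemma. *)
lemma recolouring_injective:
  fixes P c d e \<alpha> \<gamma> :: int and f g :: "nat \<Rightarrow> int"
  assumes P: "prime P" and c: "\<not> P dvd c" and d: "\<not> P dvd d" and e: "\<not> P dvd e"
    and f: "injective_mod n P f"
    and on: "\<And>i. i < n \<Longrightarrow> shifted_power P m \<alpha> \<gamma> (f i) \<Longrightarrow>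
               [c ^ m * g i = e * (c ^ m * \<gamma> + d ^ m * (f i - \<gamma>))] (mod P)"
    and off: "\<And>i. i < n \<Longrightarrow> \<not> shifted_power P m \<alpha> \<gamma> (f i) \<Longrightarrow>
               [g i = e * f i] (mod P)"
  shows "injective_mod n P g"
  unfolding injective_mod_def
proof (intro allI impI)
  let ?Q = "shifted_power P m \<alpha> \<gamma>"
  have cm: "\<not> P dvd c ^ m" and dm: "\<not> P dvd d ^ m"
    using P c d prime_dvd_power by blast+
  have mixed: False
    if ik: "i < n" "k < n" and Qi: "?Q (f i)" and Qk: "\<not> ?Q (f k)" and eq: "[g i = g k] (mod P)"
    for i k
  proof -
    have "[e * (c ^ m * \<gamma> + d ^ m * (f i - \<gamma>)) = c ^ m * g i] (mod P)"
      using on[OF ik(1) Qi] by (rule cong_sym)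
    also have "[c ^ m * g i = c ^ m * g k] (mod P)"
      using eq by (rule cong_scalar_left)
    also have "[c ^ m * g k = e * (c ^ m * f k)] (mod P)"
      using cong_scalar_left[OF off[OF ik(2) Qk], of "c ^ m"] by (simp add: ac_simps)
    finally have "[c ^ m * \<gamma> + d ^ m * (f i - \<gamma>) = c ^ m * f k] (mod P)"
      using cong_cancel_prime[OF P e] by blast
    hence "[c ^ m * (f k - \<gamma>) = d ^ m * (f i - \<gamma>)] (mod P)"
      by (simp add: cong_iff_dvd_diff algebra_simps dvd_diff_commute)
    hence "?Q (f k)" using shifted_power_transfer[OF P c d] Qi by blast
    thus False using Qk by blast
  qed
  fix i k assume i: "i < n" and k: "k < n" and eq: "[g i = g k] (mod P)"
  have "[f i = f k] (mod P)"
  proof (cases "?Q (f i)"; cases "?Q (f k)")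
    assume Qi: "?Q (f i)" and Qk: "?Q (f k)"
    have "[e * (c ^ m * \<gamma> + d ^ m * (f i - \<gamma>)) = e * (c ^ m * \<gamma> + d ^ m * (f k - \<gamma>))] (mod P)"
      using on[OF i Qi] on[OF k Qk] cong_scalar_left[OF eq, of "c ^ m"]
      by (meson cong_sym cong_trans)
    hence "[d ^ m * (f i - \<gamma>) = d ^ m * (f k - \<gamma>)] (mod P)"
      using cong_cancel_prime[OF P e] cong_add_lcancel by blast
    hence "[f i - \<gamma> = f k - \<gamma>] (mod P)"
      using cong_cancel_prime[OF P dm] by blast
    thus ?thesis by (simp add: cong_iff_dvd_diff)
  next
    assume "?Q (f i)" "\<not> ?Q (f k)"
    thus ?thesis using mixed i k eq by blast
  next
    assume "\<not> ?Q (f i)" "?Q (f k)"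
    thus ?thesis using mixed i k eq cong_sym by blast
  next
    assume "\<not> ?Q (f i)" "\<not> ?Q (f k)"
    hence "[e * f i = e * f k] (mod P)"
      using off i k eq by (meson cong_sym cong_trans)
    thus ?thesis using cong_cancel_prime[OF P e] by blast
  qed
  thus "i = k" using f i k by (simp add: injective_mod_def)
qed

lemma injective_mod_scaled:
  assumes "injective_mod n P (\<lambda>i. k * f i)"
  shows "injective_mod n P f"
  using assms cong_scalar_left unfolding injective_mod_def by blast

lemma injective_mod_multiples:
  fixes j :: int
  assumes "prime p" "\<not> [j = 0] (mod int p)"
  shows "injective_mod p (int p) (\<lambda>i. int i * j)"
  unfolding injective_mod_def
proof (intro allI impI)
  fix i k assume ik: "i < p" "k < p" and eq: "[int i * j = int k * j] (mod int p)"
  have "\<not> int p dvd j" using assms(2) by (simp add: cong_0_iff)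
  hence "[int i = int k] (mod int p)"
    using cong_cancel_prime[of "int p" j "int i" "int k"] assms(1) eq by (simp add: ac_simps)
  thus "i = k" using ik cong_int_less_eq by blast
qed

lemma recoloured_row_congs:
  fixes p m :: nat and j b c \<alpha> \<gamma> :: int and r :: "nat \<Rightarrow> int"
  assumes replaced: "\<forall>i<p. \<forall>\<beta>. \<not> [\<beta> = 0] (mod int p) \<and>
                     [B_first_row p j i = \<alpha> * \<beta> ^ m + \<gamma>] (mod int p) \<longrightarrow>
                     [c ^ m * r i = \<alpha> * b ^ m * \<beta> ^ m + c ^ m * \<gamma>] (mod int p)"
    and unchanged: "\<forall>i<p. \<not> (\<exists>\<beta>. \<not> [\<beta> = 0] (mod int p) \<and>
                     [B_first_row p j i = \<alpha> * \<beta> ^ m + \<gamma>] (mod int p)) \<longrightarrow>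
                     r i = B_first_row p j i"
    and i: "i < p"
  shows "shifted_power (int p) m \<alpha> \<gamma> (int i * j) \<Longrightarrow>
           [c ^ m * r i = c ^ m * \<gamma> + b ^ m * (int i * j - \<gamma>)] (mod int p)"
    and "\<not> shifted_power (int p) m \<alpha> \<gamma> (int i * j) \<Longrightarrow> [r i = int i * j] (mod int p)"
proof -
  have B: "[B_first_row p j i = y] (mod int p) \<longleftrightarrow> [int i * j = y] (mod int p)" for y
    by (simp add: B_first_row_def cong_def)
  show "[c ^ m * r i = c ^ m * \<gamma> + b ^ m * (int i * j - \<gamma>)] (mod int p)"
    if in_set: "shifted_power (int p) m \<alpha> \<gamma> (int i * j)"
  proof -
    obtain \<beta> where \<beta>: "\<not> [\<beta> = 0] (mod int p)" "[int i * j = \<alpha> * \<beta> ^ m + \<gamma>] (mod int p)"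
      using in_set by (auto simp: shifted_power_def)
    have "[c ^ m * r i = \<alpha> * b ^ m * \<beta> ^ m + c ^ m * \<gamma>] (mod int p)"
      using replaced i \<beta> B by blast
    moreover have "[b ^ m * (int i * j - \<gamma>) = \<alpha> * b ^ m * \<beta> ^ m] (mod int p)"
      using cong_scalar_left[OF \<beta>(2), of "b ^ m"] by (simp add: cong_iff_dvd_diff algebra_simps)
    ultimately show ?thesis
      by (smt (verit) cong_add_lcancel cong_sym cong_trans)
  qed
  show "[r i = int i * j] (mod int p)" if "\<not> shifted_power (int p) m \<alpha> \<gamma> (int i * j)"
  proof -
    have "r i = B_first_row p j i" using that unchanged i B by (auto simp: shifted_power_def)
    thus ?thesis by (simp add: B_first_row_def cong_def)
  qed
qed

(* Step (3): the same shape for j * (r t - t).  On the shifted set the relation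
   (1-j) a^m + j b^m = c^m turns the factor b^m into a^m, with unit factor j - 1;
   elsewhere j (s t - t) = (j - 1) s t. *)
lemma difference_row_congs:
  fixes P j a b c \<gamma> r :: int and i :: nat
  assumes rel: "[(1 - j) * a ^ m + j * b ^ m = c ^ m] (mod P)"
  shows "[c ^ m * r = c ^ m * \<gamma> + b ^ m * (int i * j - \<gamma>)] (mod P) \<Longrightarrow>
           [c ^ m * (j * (r - int i)) = (j - 1) * (c ^ m * \<gamma> + a ^ m * (int i * j - \<gamma>))] (mod P)"
    and "[r = int i * j] (mod P) \<Longrightarrow> [j * (r - int i) = (j - 1) * (int i * j)] (mod P)"
proof -
  assume "[c ^ m * r = c ^ m * \<gamma> + b ^ m * (int i * j - \<gamma>)] (mod P)"
  hence X: "P dvd c ^ m * r - (c ^ m * \<gamma> + b ^ m * (int i * j - \<gamma>))"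
    by (simp add: cong_iff_dvd_diff)
  have R: "P dvd (1 - j) * a ^ m + j * b ^ m - c ^ m" using rel by (simp add: cong_iff_dvd_diff)
  have "c ^ m * (j * (r - int i)) - (j - 1) * (c ^ m * \<gamma> + a ^ m * (int i * j - \<gamma>)) =
        j * (c ^ m * r - (c ^ m * \<gamma> + b ^ m * (int i * j - \<gamma>)))
        + (int i * j - \<gamma>) * ((1 - j) * a ^ m + j * b ^ m - c ^ m)"
    by (simp add: algebra_simps)
  thus "[c ^ m * (j * (r - int i)) = (j - 1) * (c ^ m * \<gamma> + a ^ m * (int i * j - \<gamma>))] (mod P)"
    using X R by (simp add: cong_iff_dvd_diff)
next
  assume "[r = int i * j] (mod P)"
  thus "[j * (r - int i) = (j - 1) * (int i * j)] (mod P)"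
    using cong_scalar_left[of r "int i * j" P j] by (simp add: cong_iff_dvd_diff algebra_simps)
qed

theorem theorem3:
  fixes p m :: nat and j a b c \<alpha> \<gamma> :: int and r' :: "nat \<Rightarrow> int"
  assumes "prime p"
    and "\<not> [j = 0] (mod int p)" and "\<not> [j = 1] (mod int p)"
    and "m \<ge> 2" and "m dvd p - 1"
    and "[(1 - j) * a ^ m + j * b ^ m = c ^ m] (mod int p)"
    and "\<not> [a ^ m = 0] (mod int p)" and "\<not> [b ^ m = 0] (mod int p)"
    and "\<not> [c ^ m = 0] (mod int p)"
    and "\<not> [a ^ m = b ^ m] (mod int p)" and "\<not> [a ^ m = c ^ m] (mod int p)"
    and "\<not> [b ^ m = c ^ m] (mod int p)"
    and "\<not> [\<alpha> = 0] (mod int p)"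
    and range: "\<forall>i<p. r' i \<in> {0..<int p}"
    and replaced: "\<forall>i<p. \<forall>\<beta>. \<not> [\<beta> = 0] (mod int p) \<and>
                     [B_first_row p j i = \<alpha> * \<beta> ^ m + \<gamma>] (mod int p) \<longrightarrow>
                     [c ^ m * r' i = \<alpha> * b ^ m * \<beta> ^ m + c ^ m * \<gamma>] (mod int p)"
    and unchanged: "\<forall>i<p. \<not> (\<exists>\<beta>. \<not> [\<beta> = 0] (mod int p) \<and>
                     [B_first_row p j i = \<alpha> * \<beta> ^ m + \<gamma>] (mod int p)) \<longrightarrow>
                     r' i = B_first_row p j i"
  shows "generates_dcls p r'"
proof (rule generates_dcls_of_orthomorphism)
  have P: "prime (int p)" using assms(1) by simp
  have units: "\<not> int p dvd a" "\<not> int p dvd b" "\<not> int p dvd c" "\<not> int p dvd j - 1"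
    using assms(3,4,7-9) prime_dvd_power_iff[OF P, of m]
    by (auto simp: cong_0_iff cong_iff_dvd_diff)
  note row = recoloured_row_congs[OF replaced unchanged]
  note multiples = injective_mod_multiples[OF assms(1,2)]
  show "injective_mod p (int p) r'"
  proof (rule recolouring_injective[OF P units(3,2) _ multiples, where e = 1])
    show "\<not> int p dvd 1" using prime_gt_1_nat[OF assms(1)] by simp
  qed (use row in simp_all)
  have "injective_mod p (int p) (\<lambda>i. j * (r' i - int i))"
    by (rule recolouring_injective[OF P units(3,1,4) multiples])
       (use row difference_row_congs[OF assms(6)] in blast)+
  thus "injective_mod p (int p) (\<lambda>i. r' i - int i)" by (rule injective_mod_scaled)
qed

end
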